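(* Let $n\le2$ and consider an additive noise channel $\mathbf r=\sqrt{p_s}\,\mathbf s+\boldsymbol\xi$ in $\mathbb R^n$ where the noise has density $f_{\boldsymbol\xi}(\mathbf x)=\int_0^\infty(2\pi\sigma^2)^{-n/2}\exp\{-|\mathbf x|^2/(2\sigma^2)\}f(\sigma)\,d\sigma$ for an arbitrary univariate probability density $f(\sigma)$ on $(0,\infty)$. Then the average symbol error rate $P_e(p_s)$ of any decoder with center-convex decision regions is convex in the signal power: $P_e''(p_s)\ge0$ for all $p_s>0$.
   Context: The normalized constellation $\{\mathbf s_1,\dots,\mathbf s_M\}$ (priors $\pi_k$) corresponds to $p_s=1$ and has pairwise disjoint decision regions $\Omega_k$; at signal power $p_s$ the transmitted points are $\sqrt{p_s}\mathbf s_k$ and the decision regions are $\sqrt{p_s}\Omega_k$ (error declared if $\mathbf r$ is in no region). $\Omega_k$ is center-convex if for every $\mathbf x\in\Omega_k$ the segment from $\mathbf s_k$ to $\mathbf x$ lies in $\Omega_k$. $P_e=\sum_k\pi_k(1-\Pr[\mathbf r\in\sqrt{p_s}\Omega_k\mid\text{$\sqrt{p_s}\mathbf s_k$ sent}])$. *)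

theory Defs
  imports "HOL-Analysis.Analysis"
begin

definition mix_density :: "(real \<Rightarrow> real) \<Rightarrow> 'a::euclidean_space \<Rightarrow> ennreal" where
  "mix_density f x =
     (\<integral>\<^sup>+ \<sigma>. ennreal ((2 * pi * \<sigma>\<^sup>2) powr (- real DIM('a) / 2)
                     * exp (- (norm x)\<^sup>2 / (2 * \<sigma>\<^sup>2)) * f \<sigma>) * indicator {0<..} \<sigma> \<partial>lborel)"

definition prob_density_pos :: "(real \<Rightarrow> real) \<Rightarrow> bool" where
  "prob_density_pos f \<longleftrightarrow> f \<in> borel_measurable borel \<and> (\<forall>\<sigma>>0. f \<sigma> \<ge> 0)
     \<and> (\<integral>\<^sup>+ \<sigma>. ennreal (f \<sigma>) * indicator {0<..} \<sigma> \<partial>lborel) = 1"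

definition center_convex :: "'a::real_vector \<Rightarrow> 'a set \<Rightarrow> bool" where
  "center_convex c \<Omega> \<longleftrightarrow> (\<forall>x\<in>\<Omega>. closed_segment c x \<subseteq> \<Omega>)"

text \<open>Probability that r = sqrt(p) s_k + xi lands in sqrt(p) Omega_k.\<close>
definition correct_prob ::
  "(real \<Rightarrow> real) \<Rightarrow> 'a::euclidean_space \<Rightarrow> 'a set \<Rightarrow> real \<Rightarrow> real" where
  "correct_prob f s \<Omega> p =
     enn2real (\<integral>\<^sup>+ x. mix_density f (x - sqrt p *\<^sub>R s) * indicator ((\<lambda>y. sqrt p *\<^sub>R y) ` \<Omega>) x \<partial>lborel)"

definition sym_err_rate ::
  "(real \<Rightarrow> real) \<Rightarrow> nat \<Rightarrow> (nat \<Rightarrow> real) \<Rightarrow> (nat \<Rightarrow> 'a::euclidean_space)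
     \<Rightarrow> (nat \<Rightarrow> 'a set) \<Rightarrow> real \<Rightarrow> real" where
  "sym_err_rate f M \<pi> s \<Omega> p = (\<Sum>k<M. \<pi> k * (1 - correct_prob f (s k) (\<Omega> k) p))"

end

theory Submission
  imports Defs "HOL-Probability.Probability"
begin

(* The error rate is a nonnegative combination of the functions 1 - P_k, so it suffices that each
  probability of correct decision P_k(p) is concave in p. Shifting by sqrt p * s_k and writing the
  noise as a Gaussian scale mixture gives P_k(p) = \<integral> f(\<sigma>) c(\<sigma>) G_\<sigma>(sqrt p * D_k) d\<sigma>
  with D_k star-shaped about 0, so it is enough that the Gaussian mass of sqrt p * D is concave in p
  for star-shaped D. In the plane the substitution y = x t turns this mass into an integral over t of
  one-dimensional moments \<integral> |x| exp(-b x\<^sup>2) 1_J(x / sqrt p) dx with J \<subseteq> \<real> star-shaped; on a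
  half-line J is an interval (0, r) up to its endpoint, and the moment (1 - exp(-b r\<^sup>2 p)) / (2 b) is
  concave in p. Dimension one reduces to the plane by adding an independent Gaussian coordinate. *)

section \<open>Concavity of functions into [0, \<infinity>]\<close>

(* Concavity stated like concave_on but for [0, \<infinity>]-valued functions, so that it passes through
  nonnegative integrals without integrability side conditions. *)
definition enn_concave_on :: "real set \<Rightarrow> (real \<Rightarrow> ennreal) \<Rightarrow> bool" where
  "enn_concave_on S F \<longleftrightarrow> convex S \<and>
     (\<forall>x\<in>S. \<forall>y\<in>S. \<forall>t. 0 \<le> t \<and> t \<le> 1 \<longrightarrow>
        ennreal (1 - t) * F x + ennreal t * F y \<le> F ((1 - t) * x + t * y))"

lemma enn_concave_onD:
  "enn_concave_on S F \<Longrightarrow> x \<in> S \<Longrightarrow> y \<in> S \<Longrightarrow> 0 \<le> t \<Longrightarrow> t \<le> 1 \<Longrightarrow>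
     ennreal (1 - t) * F x + ennreal t * F y \<le> F ((1 - t) * x + t * y)"
  unfolding enn_concave_on_def by blast

lemma enn_concave_on_cong:
  assumes "enn_concave_on S F" and "\<And>x. x \<in> S \<Longrightarrow> F x = G x"
  shows "enn_concave_on S G"
proof -
  have "(1 - t) * x + t * y \<in> S" if "x \<in> S" "y \<in> S" "0 \<le> t" "t \<le> 1" for x y t
    using assms(1) that unfolding enn_concave_on_def convex_alt by auto
  then show ?thesis
    using assms unfolding enn_concave_on_def by (metis (no_types, lifting))
qed

lemma enn_concave_on_const: "convex S \<Longrightarrow> enn_concave_on S (\<lambda>x. c)"
  unfolding enn_concave_on_def
  by (auto simp flip: distrib_right ennreal_plus)

lemma enn_concave_on_add:
  assumes "enn_concave_on S F" "enn_concave_on S G"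
  shows "enn_concave_on S (\<lambda>x. F x + G x)"
  unfolding enn_concave_on_def
proof (intro conjI ballI allI impI)
  show "convex S" using assms(1) by (simp add: enn_concave_on_def)
  fix x y and t :: real assume xy: "x \<in> S" "y \<in> S" and t: "0 \<le> t \<and> t \<le> 1"
  have "ennreal (1 - t) * (F x + G x) + ennreal t * (F y + G y)
      = (ennreal (1 - t) * F x + ennreal t * F y) + (ennreal (1 - t) * G x + ennreal t * G y)"
    by (simp add: algebra_simps)
  also have "\<dots> \<le> F ((1 - t) * x + t * y) + G ((1 - t) * x + t * y)"
    using xy t by (intro add_mono enn_concave_onD[OF assms(1)] enn_concave_onD[OF assms(2)]) auto
  finally show "ennreal (1 - t) * (F x + G x) + ennreal t * (F y + G y)
      \<le> F ((1 - t) * x + t * y) + G ((1 - t) * x + t * y)" .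
qed

lemma enn_concave_on_cmult:
  assumes "enn_concave_on S F"
  shows "enn_concave_on S (\<lambda>x. c * F x)"
  unfolding enn_concave_on_def
proof (intro conjI ballI allI impI)
  show "convex S" using assms by (simp add: enn_concave_on_def)
  fix x y and t :: real assume xy: "x \<in> S" "y \<in> S" and t: "0 \<le> t \<and> t \<le> 1"
  have "ennreal (1 - t) * (c * F x) + ennreal t * (c * F y) = c * (ennreal (1 - t) * F x + ennreal t * F y)"
    by (simp add: algebra_simps)
  also have "\<dots> \<le> c * F ((1 - t) * x + t * y)"
    using xy t by (intro mult_left_mono enn_concave_onD[OF assms]) auto
  finally show "ennreal (1 - t) * (c * F x) + ennreal t * (c * F y) \<le> c * F ((1 - t) * x + t * y)" .
qed

lemma enn_concave_on_cmult_cancel: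
  assumes "enn_concave_on S (\<lambda>x. c * F x)" and "c \<noteq> 0" and "c \<noteq> \<top>"
  shows "enn_concave_on S F"
proof -
  have "inverse c * (c * y) = y" for y
    using assms(2,3)
    by (metis mult.assoc mult.commute divide_ennreal_def ennreal_divide_self mult_1 top.not_eq_extremum)
  then show ?thesis
    using enn_concave_on_cmult[OF assms(1), of "inverse c"] by simp
qed

lemma enn_concave_on_nn_integral:
  assumes "convex S"
    and meas: "\<And>x. x \<in> S \<Longrightarrow> (\<lambda>\<omega>. G \<omega> x) \<in> borel_measurable M"
    and conc: "\<And>\<omega>. \<omega> \<in> space M \<Longrightarrow> enn_concave_on S (G \<omega>)"
  shows "enn_concave_on S (\<lambda>x. \<integral>\<^sup>+\<omega>. G \<omega> x \<partial>M)"
  unfolding enn_concave_on_def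
proof (intro conjI ballI allI impI)
  fix x y and t :: real assume xy: "x \<in> S" "y \<in> S" and t: "0 \<le> t \<and> t \<le> 1"
  have "ennreal (1 - t) * (\<integral>\<^sup>+\<omega>. G \<omega> x \<partial>M) + ennreal t * (\<integral>\<^sup>+\<omega>. G \<omega> y \<partial>M)
      = (\<integral>\<^sup>+\<omega>. ennreal (1 - t) * G \<omega> x + ennreal t * G \<omega> y \<partial>M)"
    using meas xy by (simp add: nn_integral_add nn_integral_cmult)
  also have "\<dots> \<le> (\<integral>\<^sup>+\<omega>. G \<omega> ((1 - t) * x + t * y) \<partial>M)"
    using conc xy t by (intro nn_integral_mono) (auto intro: enn_concave_onD)
  finally show "ennreal (1 - t) * (\<integral>\<^sup>+\<omega>. G \<omega> x \<partial>M) + ennreal t * (\<integral>\<^sup>+\<omega>. G \<omega> y \<partial>M)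
      \<le> (\<integral>\<^sup>+\<omega>. G \<omega> ((1 - t) * x + t * y) \<partial>M)" .
qed (fact assms(1))

lemma enn_concave_on_ennreal:
  assumes "concave_on S F" and "\<And>x. x \<in> S \<Longrightarrow> 0 \<le> F x"
  shows "enn_concave_on S (\<lambda>x. ennreal (F x))"
  unfolding enn_concave_on_def
proof (intro conjI ballI allI impI)
  show "convex S" using assms(1) by (rule concave_on_imp_convex)
  fix x y and t :: real assume xy: "x \<in> S" "y \<in> S" and t: "0 \<le> t \<and> t \<le> 1"
  have "ennreal (1 - t) * ennreal (F x) + ennreal t * ennreal (F y) = ennreal ((1 - t) * F x + t * F y)"
    using xy t assms(2) by (simp add: ennreal_mult ennreal_plus)
  also have "\<dots> \<le> ennreal (F ((1 - t) * x + t * y))"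
    using concave_onD[OF assms(1), of t x y] xy t by (intro ennreal_leI) simp
  finally show "ennreal (1 - t) * ennreal (F x) + ennreal t * ennreal (F y) \<le> ennreal (F ((1 - t) * x + t * y))" .
qed

lemma concave_on_enn2real:
  assumes conc: "enn_concave_on S F" and fin: "\<And>x. x \<in> S \<Longrightarrow> F x < \<top>"
  shows "concave_on S (\<lambda>x. enn2real (F x))"
proof (rule concave_on_linorderI)
  show "convex S" using conc by (simp add: enn_concave_on_def)
  fix t :: real and x y assume t: "0 < t" "t < 1" and xy: "x \<in> S" "y \<in> S"
  have "(1 - t) * x + t * y \<in> S"
    using \<open>convex S\<close> xy t by (simp add: convex_alt)
  then have "enn2real (ennreal (1 - t) * F x + ennreal t * F y) \<le> enn2real (F ((1 - t) * x + t * y))"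
    using enn_concave_onD[OF conc xy, of t] t fin by (intro enn2real_mono) auto
  then show "(1 - t) * enn2real (F x) + t * enn2real (F y) \<le> enn2real (F ((1 - t) *\<^sub>R x + t *\<^sub>R y))"
    using t fin[OF xy(1)] fin[OF xy(2)] by (simp add: enn2real_plus enn2real_mult ennreal_mult_less_top)
qed

lemma convex_on_sum_fun:
  assumes "finite I" and "convex S" and "\<And>i. i \<in> I \<Longrightarrow> convex_on S (f i)"
  shows "convex_on S (\<lambda>x. \<Sum>i\<in>I. f i x)"
  using assms by (induction I rule: finite_induct) (auto simp: convex_on_const)

lemma concave_on_one_minus_exp:
  fixes k :: real
  assumes "0 \<le> k" and "convex S"
  shows "concave_on S (\<lambda>p. 1 - exp (- k * p))"
proof -
  have "convex_on S (\<lambda>p. exp (- k * p))"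
  proof (rule convex_onI)
    fix t x y :: real assume t: "0 < t" "t < 1"
    have "exp ((1 - t) * (- k * x) + t * (- k * y)) \<le> (1 - t) * exp (- k * x) + t * exp (- k * y)"
      using convex_onD[OF exp_convex, of t "- k * x" "- k * y"] t by simp
    then show "exp (- k * ((1 - t) *\<^sub>R x + t *\<^sub>R y)) \<le> (1 - t) * exp (- k * x) + t * exp (- k * y)"
      by (simp add: algebra_simps)
  qed (fact assms(2))
  then show ?thesis
    using assms(2) by (intro concave_on_diff) (auto simp: concave_on_const)
qed

section \<open>Center-convex sets\<close>

lemma center_convex_real_segment:
  fixes J :: "real set"
  assumes "center_convex 0 J" "x \<in> J" "0 < y" "y \<le> x"
  shows "y \<in> J"
  using assms unfolding center_convex_def by (force simp: closed_segment_eq_real_ivl)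

lemma center_convex_real_cases:
  fixes J :: "real set"
  assumes cJ: "center_convex 0 J"
  obtains "{0<..} \<subseteq> J"
    | r where "0 \<le> r" "\<And>y. 0 < y \<Longrightarrow> y < r \<Longrightarrow> y \<in> J" "\<And>y. r < y \<Longrightarrow> y \<notin> J"
proof (cases "{0<..} \<subseteq> J")
  case False
  then obtain y0 where y0: "0 < y0" "y0 \<notin> J" by auto
  define A where "A = insert 0 (J \<inter> {0<..})"
  have bdd: "bdd_above A"
  proof (rule bdd_aboveI)
    fix x assume "x \<in> A"
    then show "x \<le> y0"
      using center_convex_real_segment[OF cJ, of x y0] y0 unfolding A_def by force
  qed
  show thesis
  proof
    show "0 \<le> Sup A" using cSup_upper[OF _ bdd] by (simp add: A_def)
  next
    fix y assume y: "0 < y" "y < Sup A"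
    then obtain x where "x \<in> A" "y < x" using less_cSup_iff[OF _ bdd] by (auto simp: A_def)
    then show "y \<in> J" using center_convex_real_segment[OF cJ, of x y] y unfolding A_def by auto
  next
    fix y assume "Sup A < y"
    then show "y \<notin> J"
      using cSup_upper[OF _ bdd, of y] cSup_upper[OF _ bdd, of 0] unfolding A_def by force
  qed
qed

lemma center_convex_linear_vimage:
  assumes L: "linear L" and D: "center_convex 0 D"
  shows "center_convex 0 (L -` D)"
  unfolding center_convex_def
proof (intro ballI subsetI)
  fix y w assume y: "y \<in> L -` D" and w: "w \<in> closed_segment 0 y"
  have "L w \<in> closed_segment (L 0) (L y)"
    using w closed_segment_linear_image[OF L] by blast
  then show "w \<in> L -` D"
    using D y linear_0[OF L] unfolding center_convex_def by auto
qed

lemma center_convex_translate: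
  assumes "center_convex s \<Omega>"
  shows "center_convex 0 ((\<lambda>z. z + s) -` \<Omega>)"
  unfolding center_convex_def
proof (intro ballI subsetI)
  fix z w assume z: "z \<in> (\<lambda>z. z + s) -` \<Omega>" and w: "w \<in> closed_segment 0 z"
  have "s + w \<in> closed_segment (s + 0) (s + z)"
    using w unfolding closed_segment_translation by blast
  also have "\<dots> \<subseteq> \<Omega>"
    using assms z unfolding center_convex_def by (simp add: add.commute)
  finally show "w \<in> (\<lambda>z. z + s) -` \<Omega>" by (simp add: add.commute)
qed

section \<open>Lebesgue integrals\<close>

lemma nn_integral_exp_neg_square:
  fixes c :: real assumes c: "0 < c"
  shows "(\<integral>\<^sup>+y. ennreal (exp (- c * y\<^sup>2)) \<partial>lborel) = ennreal (sqrt (pi / c))"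
proof -
  define \<sigma> where "\<sigma> = sqrt (1 / (2 * c))"
  have \<sigma>: "0 < \<sigma>" "\<sigma>\<^sup>2 = 1 / (2 * c)" using c by (simp_all add: \<sigma>_def)
  have "exp (- c * y\<^sup>2) = sqrt (pi / c) * normal_density 0 \<sigma> y" for y
  proof -
    have "2 * pi * \<sigma>\<^sup>2 = pi / c" "- (y - 0)\<^sup>2 / (2 * \<sigma>\<^sup>2) = - c * y\<^sup>2"
      using c by (simp_all add: \<sigma> field_simps)
    then show ?thesis
      using c unfolding normal_density_def by simp
  qed
  then have "(\<integral>\<^sup>+y. ennreal (exp (- c * y\<^sup>2)) \<partial>lborel)
      = (\<integral>\<^sup>+y. ennreal (sqrt (pi / c)) * ennreal (normal_density 0 \<sigma> y) \<partial>lborel)"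
    using c by (simp add: ennreal_mult)
  also have "\<dots> = ennreal (sqrt (pi / c))"
    using \<sigma>(1) by (simp add: nn_integral_cmult nn_integral_eq_integral)
  finally show ?thesis .
qed

lemma nn_integral_exp_neg_norm_square:
  assumes c: "0 < c"
  shows "(\<integral>\<^sup>+z. ennreal (exp (- c * (norm (z::'a::euclidean_space))\<^sup>2)) \<partial>lborel)
     = ennreal (sqrt (pi / c) ^ DIM('a))"
proof -
  have "ennreal (exp (- c * (norm z)\<^sup>2)) = (\<Prod>b\<in>Basis. ennreal (exp (- c * (z \<bullet> b)\<^sup>2)))" for z :: 'a
  proof -
    have "(norm z)\<^sup>2 = (\<Sum>b\<in>Basis. (z \<bullet> b)\<^sup>2)"
      unfolding power2_norm_eq_inner by (subst euclidean_inner) (simp add: power2_eq_square)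
    then have "exp (- c * (norm z)\<^sup>2) = (\<Prod>b\<in>Basis. exp (- c * (z \<bullet> b)\<^sup>2))"
      by (simp add: sum_distrib_left exp_sum)
    then show ?thesis by (simp add: prod_ennreal)
  qed
  then have "(\<integral>\<^sup>+z. ennreal (exp (- c * (norm (z::'a))\<^sup>2)) \<partial>lborel)
      = (\<integral>\<^sup>+z. (\<Prod>b\<in>Basis. ennreal (exp (- c * ((z::'a) \<bullet> b)\<^sup>2))) \<partial>lborel)"
    by (simp only:)
  also have "\<dots> = (\<Prod>b\<in>(Basis::'a set). \<integral>\<^sup>+x. ennreal (exp (- c * x\<^sup>2)) \<partial>lborel)"
    by (rule nn_integral_lborel_prod) auto
  also have "\<dots> = ennreal (sqrt (pi / c)) ^ DIM('a)"
    by (simp only: nn_integral_exp_neg_square[OF c] prod_constant)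
  finally show ?thesis
    using c by (simp add: ennreal_power)
qed

lemma nn_integral_gauss_moment_Icc:
  fixes a b :: real
  assumes "0 \<le> a" "0 < b"
  shows "(\<integral>\<^sup>+x. ennreal (x * exp (- b * x\<^sup>2)) * indicator {0..a} x \<partial>lborel)
     = ennreal ((1 - exp (- b * a\<^sup>2)) / (2 * b))"
proof -
  have "(\<integral>\<^sup>+x. ennreal (x * exp (- b * x\<^sup>2)) * indicator {0..a} x \<partial>lborel)
      = ennreal ((\<lambda>x. - exp (- b * x\<^sup>2) / (2 * b)) a - (\<lambda>x. - exp (- b * x\<^sup>2) / (2 * b)) 0)"
    using assms
    by (intro nn_integral_FTC_Icc)
       (auto intro!: derivative_eq_intros simp: field_simps power2_eq_square)
  then show ?thesis by (simp add: diff_divide_distrib)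
qed

lemma nn_integral_lborel_pair_shear:
  fixes F :: "real \<times> real \<Rightarrow> ennreal"
  assumes F[measurable]: "F \<in> borel_measurable borel"
  shows "(\<integral>\<^sup>+z. F z \<partial>lborel) = (\<integral>\<^sup>+s. \<integral>\<^sup>+x. ennreal \<bar>x\<bar> * F (x, x * s) \<partial>lborel \<partial>lborel)"
proof -
  have "(\<integral>\<^sup>+z. F z \<partial>lborel) = (\<integral>\<^sup>+z. F z \<partial>(lborel \<Otimes>\<^sub>M lborel))"
    by (simp only: lborel_prod)
  also have "\<dots> = (\<integral>\<^sup>+x. \<integral>\<^sup>+y. F (x, y) \<partial>lborel \<partial>lborel)"
    by (rule lborel.nn_integral_fst[symmetric]) (simp add: lborel_prod)
  also have "\<dots> = (\<integral>\<^sup>+x. \<integral>\<^sup>+s. ennreal \<bar>x\<bar> * F (x, x * s) \<partial>lborel \<partial>lborel)"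
  proof (rule nn_integral_cong_AE)
    show "AE x in lborel. (\<integral>\<^sup>+y. F (x, y) \<partial>lborel) = (\<integral>\<^sup>+s. ennreal \<bar>x\<bar> * F (x, x * s) \<partial>lborel)"
      using AE_lborel_singleton[of 0]
    proof eventually_elim
      case (elim x)
      then have "(\<integral>\<^sup>+y. F (x, y) \<partial>lborel) = ennreal \<bar>x\<bar> * (\<integral>\<^sup>+s. F (x, 0 + x * s) \<partial>lborel)"
        by (intro nn_integral_real_affine) measurable
      then show ?case by (simp add: nn_integral_cmult)
    qed
  qed
  also have "\<dots> = (\<integral>\<^sup>+s. \<integral>\<^sup>+x. ennreal \<bar>x\<bar> * F (x, x * s) \<partial>lborel \<partial>lborel)"
    by (rule lborel_pair.Fubini') measurable
  finally show ?thesis .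
qed

lemma lborel_distr_Basis_pair:
  fixes b1 b2 :: "'a::euclidean_space"
  assumes B: "Basis = {b1, b2}" and ne: "b1 \<noteq> b2"
  shows "distr lborel borel (\<lambda>z::real \<times> real. fst z *\<^sub>R b1 + snd z *\<^sub>R b2) = lborel"
    (is "distr lborel borel ?T = lborel")
proof (rule lborel_eqI[symmetric])
  have [measurable]: "?T \<in> borel_measurable borel"
    by (intro borel_measurable_continuous_onI continuous_intros)
  have b: "b1 \<in> Basis" "b2 \<in> Basis" using B by auto
  then have coord: "(x *\<^sub>R b1 + y *\<^sub>R b2) \<bullet> b1 = x" "(x *\<^sub>R b1 + y *\<^sub>R b2) \<bullet> b2 = y" for x y
    using ne by (simp_all add: inner_add_left inner_Basis)
  fix l u :: 'a assume le: "\<And>b. b \<in> Basis \<Longrightarrow> l \<bullet> b \<le> u \<bullet> b"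
  have "?T -` box l u = {l \<bullet> b1 <..< u \<bullet> b1} \<times> {l \<bullet> b2 <..< u \<bullet> b2}"
    by (auto simp: mem_box B coord)
  then have "emeasure (distr lborel borel ?T) (box l u)
      = emeasure (lborel \<Otimes>\<^sub>M lborel) ({l \<bullet> b1 <..< u \<bullet> b1} \<times> {l \<bullet> b2 <..< u \<bullet> b2})"
    by (simp add: emeasure_distr lborel_prod[symmetric])
  also have "\<dots> = ennreal (u \<bullet> b1 - l \<bullet> b1) * ennreal (u \<bullet> b2 - l \<bullet> b2)"
    using le b by (simp add: lborel.emeasure_pair_measure_Times)
  also have "\<dots> = (\<Prod>b\<in>Basis. (u - l) \<bullet> b)"
    using le b ne by (simp add: B inner_diff_left ennreal_mult)
  finally show "emeasure (distr lborel borel ?T) (box l u) = (\<Prod>b\<in>Basis. (u - l) \<bullet> b)" .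
qed simp

lemma nn_integral_lborel_translate:
  fixes g :: "'a::euclidean_space \<Rightarrow> ennreal"
  assumes [measurable]: "g \<in> borel_measurable borel"
  shows "(\<integral>\<^sup>+x. g (x - c) \<partial>lborel) = (\<integral>\<^sup>+x. g x \<partial>lborel)"
proof -
  have "(\<integral>\<^sup>+x. g (x - c) \<partial>lborel) = (\<integral>\<^sup>+x. g x \<partial>distr lborel borel ((+) (- c)))"
    by (subst nn_integral_distr) auto
  then show ?thesis by (simp only: lborel_distr_plus)
qed

section \<open>Gaussian mass of dilated center-convex sets\<close>

lemma enn_concave_on_halfline_gauss_moment:
  fixes J :: "real set" and b :: real
  assumes J[measurable]: "J \<in> sets borel" and cJ: "center_convex 0 J" and b: "0 < b"
  shows "enn_concave_on {0<..}
           (\<lambda>p. \<integral>\<^sup>+x. ennreal (x * exp (- b * x\<^sup>2)) * indicator {0<..} x * indicator J (x / sqrt p) \<partial>lborel)"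
proof -
  let ?w = "\<lambda>x. ennreal (x * exp (- b * x\<^sup>2))"
  from cJ show ?thesis
  proof (cases rule: center_convex_real_cases)
    case 1
    have "(\<integral>\<^sup>+x. ?w x * indicator {0<..} x * indicator J (x / sqrt p) \<partial>lborel)
        = (\<integral>\<^sup>+x. ?w x * indicator {0<..} x \<partial>lborel)" if "0 < p" for p
      using 1 that by (intro nn_integral_cong) (auto simp: indicator_def subset_eq)
    then show ?thesis
      by (intro enn_concave_on_cong[OF enn_concave_on_const]) auto
  next
    case (2 r)
    have "(\<integral>\<^sup>+x. ?w x * indicator {0<..} x * indicator J (x / sqrt p) \<partial>lborel)
        = ennreal ((1 - exp (- (b * r\<^sup>2) * p)) / (2 * b))" if p: "0 < p" for p
    proof -
      have "AE x in lborel. ?w x * indicator {0<..} x * indicator J (x / sqrt p)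
            = ?w x * indicator {0 .. sqrt p * r} x"
        using AE_lborel_singleton[of 0] AE_lborel_singleton[of "sqrt p * r"]
      proof eventually_elim
        case (elim x)
        with p 2 show ?case
          by (cases "x < 0"; cases "x < sqrt p * r")
             (auto simp: indicator_def field_simps dest: 2(2)[of "x / sqrt p"] 2(3)[of "x / sqrt p"])
      qed
      then have "(\<integral>\<^sup>+x. ?w x * indicator {0<..} x * indicator J (x / sqrt p) \<partial>lborel)
          = (\<integral>\<^sup>+x. ?w x * indicator {0 .. sqrt p * r} x \<partial>lborel)"
        by (rule nn_integral_cong_AE)
      also have "\<dots> = ennreal ((1 - exp (- b * (sqrt p * r)\<^sup>2)) / (2 * b))"
        using p b 2(1) by (intro nn_integral_gauss_moment_Icc) auto
      also have "\<dots> = ennreal ((1 - exp (- (b * r\<^sup>2) * p)) / (2 * b))"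
        using p by (simp add: power_mult_distrib algebra_simps)
      finally show ?thesis .
    qed
    moreover have "enn_concave_on {0<..} (\<lambda>p. ennreal ((1 - exp (- (b * r\<^sup>2) * p)) / (2 * b)))"
      using b by (intro enn_concave_on_ennreal concave_on_cdiv concave_on_one_minus_exp) auto
    ultimately show ?thesis
      by (auto intro: enn_concave_on_cong)
  qed
qed

lemma enn_concave_on_line_gauss_moment:
  fixes J :: "real set" and b :: real
  assumes J[measurable]: "J \<in> sets borel" and cJ: "center_convex 0 J" and b: "0 < b"
  shows "enn_concave_on {0<..} (\<lambda>p. \<integral>\<^sup>+x. ennreal (\<bar>x\<bar> * exp (- b * x\<^sup>2)) * indicator J (x / sqrt p) \<partial>lborel)"
proof -
  define J' where "J' = uminus -` J"
  have J'[measurable]: "J' \<in> sets borel"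
    unfolding J'_def by (rule measurable_sets_borel[OF _ J]) simp
  have cJ': "center_convex 0 J'"
    unfolding J'_def by (rule center_convex_linear_vimage[OF _ cJ]) (simp add: linear_uminus)
  let ?H = "\<lambda>J p. \<integral>\<^sup>+x. ennreal (x * exp (- b * x\<^sup>2)) * indicator {0<..} x * indicator J (x / sqrt p) \<partial>lborel"
  have "(\<integral>\<^sup>+x. ennreal (\<bar>x\<bar> * exp (- b * x\<^sup>2)) * indicator J (x / sqrt p) \<partial>lborel) = ?H J p + ?H J' p" for p
  proof -
    have "(\<integral>\<^sup>+x. ennreal (\<bar>x\<bar> * exp (- b * x\<^sup>2)) * indicator J (x / sqrt p) \<partial>lborel)
       = (\<integral>\<^sup>+x. ennreal (x * exp (- b * x\<^sup>2)) * indicator {0<..} x * indicator J (x / sqrt p)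
           + ennreal ((- x) * exp (- b * (- x)\<^sup>2)) * indicator {0<..} (- x) * indicator J' ((- x) / sqrt p) \<partial>lborel)"
      by (intro nn_integral_cong) (auto simp: J'_def indicator_def)
    also have "\<dots> = ?H J p + (\<integral>\<^sup>+x. ennreal ((- x) * exp (- b * (- x)\<^sup>2)) * indicator {0<..} (- x)
                                   * indicator J' ((- x) / sqrt p) \<partial>lborel)"
      by (rule nn_integral_add) auto
    also have "(\<integral>\<^sup>+x. ennreal ((- x) * exp (- b * (- x)\<^sup>2)) * indicator {0<..} (- x)
                     * indicator J' ((- x) / sqrt p) \<partial>lborel) = ?H J' p"
      using nn_integral_real_affine[of "\<lambda>x. ennreal (x * exp (- b * x\<^sup>2)) * indicator {0<..} x
                                             * indicator J' (x / sqrt p)" "-1" 0]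
      by simp
    finally show ?thesis .
  qed
  then show ?thesis
    using enn_concave_on_add[OF enn_concave_on_halfline_gauss_moment[OF J cJ b]
                                enn_concave_on_halfline_gauss_moment[OF J' cJ' b]]
    by simp
qed

definition gauss_mass :: "real \<Rightarrow> 'a::euclidean_space set \<Rightarrow> real \<Rightarrow> ennreal" where
  "gauss_mass c D p = (\<integral>\<^sup>+z. ennreal (exp (- c * (norm z)\<^sup>2)) * indicator D (inverse (sqrt p) *\<^sub>R z) \<partial>lborel)"

lemma enn_concave_on_gauss_mass_real_pair:
  fixes D :: "(real \<times> real) set"
  assumes D[measurable]: "D \<in> sets borel" and cD: "center_convex 0 D" and c: "0 < c"
  shows "enn_concave_on {0<..} (gauss_mass c D)"
proof -
  define L where "L s p = (\<integral>\<^sup>+x. ennreal (\<bar>x\<bar> * exp (- (c * (1 + s\<^sup>2)) * x\<^sup>2))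
                                 * indicator ((\<lambda>x. (x, x * s)) -` D) (x / sqrt p) \<partial>lborel)" for s p
  have conc: "enn_concave_on {0<..} (L s)" for s
    unfolding L_def
  proof (rule enn_concave_on_line_gauss_moment)
    have "linear (\<lambda>x::real. (x, x * s))"
      by (rule linearI) (auto simp: algebra_simps)
    then show "center_convex 0 ((\<lambda>x. (x, x * s)) -` D)"
      by (rule center_convex_linear_vimage[OF _ cD])
    show "(\<lambda>x. (x, x * s)) -` D \<in> sets borel"
      by (rule measurable_sets_borel[OF _ D]) simp
    show "0 < c * (1 + s\<^sup>2)" using c by (simp add: add_pos_nonneg)
  qed
  have "gauss_mass c D = (\<lambda>p. \<integral>\<^sup>+s. L s p \<partial>lborel)"
  proof
    fix p
    have "ennreal \<bar>x\<bar> * (ennreal (exp (- c * (norm (x, x * s))\<^sup>2)) * indicator D (inverse (sqrt p) *\<^sub>R (x, x * s)))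
        = ennreal (\<bar>x\<bar> * exp (- (c * (1 + s\<^sup>2)) * x\<^sup>2)) * indicator ((\<lambda>x. (x, x * s)) -` D) (x / sqrt p)"
      for x s :: real
      by (simp add: norm_Pair ennreal_mult' divide_inverse algebra_simps power_mult_distrib indicator_def)
    then show "gauss_mass c D p = (\<integral>\<^sup>+s. L s p \<partial>lborel)"
      unfolding gauss_mass_def L_def
      by (subst nn_integral_lborel_pair_shear) simp_all
  qed
  moreover have "enn_concave_on {0<..} (\<lambda>p. \<integral>\<^sup>+s. L s p \<partial>lborel)"
    by (intro enn_concave_on_nn_integral conc) (simp_all add: L_def)
  ultimately show ?thesis by simp
qed

lemma gauss_mass_isometry_vimage:
  fixes T :: "'b::euclidean_space \<Rightarrow> 'a::euclidean_space"
  assumes lin: "linear T" and T[measurable]: "T \<in> borel_measurable borel"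
    and norm_T: "\<And>x. norm (T x) = norm x" and distr_T: "distr lborel borel T = lborel"
    and D[measurable]: "D \<in> sets borel"
  shows "gauss_mass c D p = gauss_mass c (T -` D) p"
proof -
  have "gauss_mass c D p
      = (\<integral>\<^sup>+z. ennreal (exp (- c * (norm z)\<^sup>2)) * indicator D (inverse (sqrt p) *\<^sub>R z) \<partial>distr lborel borel T)"
    unfolding gauss_mass_def distr_T ..
  also have "\<dots> = (\<integral>\<^sup>+y. ennreal (exp (- c * (norm (T y))\<^sup>2)) * indicator D (inverse (sqrt p) *\<^sub>R T y) \<partial>lborel)"
    by (rule nn_integral_distr) auto
  also have "\<dots> = gauss_mass c (T -` D) p"
    unfolding gauss_mass_def
    by (intro nn_integral_cong) (simp add: norm_T linear_scale[OF lin, symmetric] indicator_def)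
  finally show ?thesis .
qed

lemma enn_concave_on_gauss_mass_DIM2:
  fixes D :: "'a::euclidean_space set"
  assumes dim: "DIM('a) = 2" and D[measurable]: "D \<in> sets borel" and cD: "center_convex 0 D" and c: "0 < c"
  shows "enn_concave_on {0<..} (gauss_mass c D)"
proof -
  obtain b1 b2 :: 'a where B: "Basis = {b1, b2}" and ne: "b1 \<noteq> b2"
    using dim card_2_iff by metis
  define T where "T z = fst z *\<^sub>R b1 + snd z *\<^sub>R b2" for z :: "real \<times> real"
  have lin: "linear T"
    unfolding T_def by (rule linearI) (auto simp: algebra_simps)
  have T[measurable]: "T \<in> borel_measurable borel"
    unfolding T_def by (intro borel_measurable_continuous_onI continuous_intros)
  have "b1 \<in> Basis" "b2 \<in> Basis" using B by auto
  then have norm_T: "norm (T z) = norm z" for z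
    using ne ne[symmetric]
    by (cases z) (simp add: T_def norm_eq_sqrt_inner inner_add_left inner_add_right inner_Basis)
  have "gauss_mass c D = gauss_mass c (T -` D)"
    using lborel_distr_Basis_pair[OF B ne]
    by (intro ext gauss_mass_isometry_vimage[OF lin T norm_T]) (simp_all add: T_def)
  moreover have "enn_concave_on {0<..} (gauss_mass c (T -` D))"
    by (intro enn_concave_on_gauss_mass_real_pair center_convex_linear_vimage[OF lin cD] c
              measurable_sets_borel[OF T D])
  ultimately show ?thesis by simp
qed

lemma gauss_mass_vimage_fst:
  fixes D :: "'a::euclidean_space set"
  assumes D[measurable]: "D \<in> sets borel" and c: "0 < c"
  shows "gauss_mass c (fst -` D :: ('a \<times> real) set) p = ennreal (sqrt (pi / c)) * gauss_mass c D p"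
proof -
  have [measurable]: "(fst -` D :: ('a \<times> real) set) \<in> sets borel"
    by (rule measurable_sets_borel[OF _ D])
       (rule borel_measurable_continuous_onI[OF continuous_on_fst[OF continuous_on_id]])
  have "gauss_mass c (fst -` D :: ('a \<times> real) set) p
      = (\<integral>\<^sup>+x. \<integral>\<^sup>+y. ennreal (exp (- c * (norm (x, y))\<^sup>2)) * indicator (fst -` D) (inverse (sqrt p) *\<^sub>R (x, y::real)) \<partial>lborel \<partial>lborel)"
    unfolding gauss_mass_def lborel_prod[symmetric]
    by (rule lborel.nn_integral_fst[symmetric]) (simp add: lborel_prod)
  also have "\<dots> = (\<integral>\<^sup>+x. (ennreal (exp (- c * (norm x)\<^sup>2)) * indicator D (inverse (sqrt p) *\<^sub>R x))
                         * (\<integral>\<^sup>+y. ennreal (exp (- c * y\<^sup>2)) \<partial>lborel) \<partial>lborel)"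
  proof (intro nn_integral_cong)
    fix x :: 'a
    have split: "ennreal (exp (- c * (norm (x, y))\<^sup>2)) * indicator (fst -` D) (inverse (sqrt p) *\<^sub>R (x, y))
        = (ennreal (exp (- c * (norm x)\<^sup>2)) * indicator D (inverse (sqrt p) *\<^sub>R x)) * ennreal (exp (- c * y\<^sup>2))"
      for y :: real
      by (simp add: norm_Pair exp_add[symmetric] algebra_simps ennreal_mult[symmetric] indicator_def)
    show "(\<integral>\<^sup>+y. ennreal (exp (- c * (norm (x, y))\<^sup>2)) * indicator (fst -` D) (inverse (sqrt p) *\<^sub>R (x, y::real)) \<partial>lborel)
        = (ennreal (exp (- c * (norm x)\<^sup>2)) * indicator D (inverse (sqrt p) *\<^sub>R x))
          * (\<integral>\<^sup>+y. ennreal (exp (- c * y\<^sup>2)) \<partial>lborel)"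
      unfolding split by (rule nn_integral_cmult) simp
  qed
  also have "\<dots> = ennreal (sqrt (pi / c)) * gauss_mass c D p"
    unfolding gauss_mass_def nn_integral_exp_neg_square[OF c]
    by (subst nn_integral_multc) (simp_all add: mult.commute)
  finally show ?thesis .
qed

lemma enn_concave_on_gauss_mass_DIM1:
  fixes D :: "'a::euclidean_space set"
  assumes dim: "DIM('a) = 1" and D[measurable]: "D \<in> sets borel" and cD: "center_convex 0 D" and c: "0 < c"
  shows "enn_concave_on {0<..} (gauss_mass c D)"
proof (rule enn_concave_on_cmult_cancel)
  have "enn_concave_on {0<..} (gauss_mass c (fst -` D :: ('a \<times> real) set))"
    using dim c
    by (intro enn_concave_on_gauss_mass_DIM2 center_convex_linear_vimage[OF linear_fst cD]
              measurable_sets_borel[OF _ D] borel_measurable_continuous_onI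
              continuous_on_fst[OF continuous_on_id]) simp_all
  moreover have "gauss_mass c (fst -` D :: ('a \<times> real) set) = (\<lambda>p. ennreal (sqrt (pi / c)) * gauss_mass c D p)"
    using gauss_mass_vimage_fst[OF D c] by (rule ext)
  ultimately show "enn_concave_on {0<..} (\<lambda>p. ennreal (sqrt (pi / c)) * gauss_mass c D p)"
    by simp
qed (use c in auto)

lemma enn_concave_on_gauss_mass:
  fixes D :: "'a::euclidean_space set"
  assumes "DIM('a) \<le> 2" and "D \<in> sets borel" and "center_convex 0 D" and "0 < c"
  shows "enn_concave_on {0<..} (gauss_mass c D)"
proof -
  have "DIM('a) = 1 \<or> DIM('a) = 2"
    using assms(1) DIM_positive[where 'a='a] by linarith
  then show ?thesis
    using enn_concave_on_gauss_mass_DIM1[OF _ assms(2-4)] enn_concave_on_gauss_mass_DIM2[OF _ assms(2-4)]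
    by blast
qed

section \<open>The scale-mixture noise channel\<close>

lemma borel_measurable_mix_density [measurable]:
  assumes [measurable]: "f \<in> borel_measurable borel"
  shows "mix_density f \<in> borel_measurable borel"
  unfolding mix_density_def by measurable

lemma nn_integral_gauss_mixture_component:
  fixes \<sigma> :: real
  assumes "0 < \<sigma>"
  shows "ennreal ((2 * pi * \<sigma>\<^sup>2) powr (- real DIM('a) / 2))
           * (\<integral>\<^sup>+x. ennreal (exp (- (1 / (2 * \<sigma>\<^sup>2)) * (norm (x::'a::euclidean_space))\<^sup>2)) \<partial>lborel) = 1"
proof -
  define A where "A = 2 * pi * \<sigma>\<^sup>2"
  have A: "0 < A" using assms by (simp add: A_def)
  have "(\<integral>\<^sup>+x. ennreal (exp (- (1 / (2 * \<sigma>\<^sup>2)) * (norm (x::'a))\<^sup>2)) \<partial>lborel)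
      = ennreal (sqrt (pi / (1 / (2 * \<sigma>\<^sup>2))) ^ DIM('a))"
    using assms by (intro nn_integral_exp_neg_norm_square) simp
  also have "sqrt (pi / (1 / (2 * \<sigma>\<^sup>2))) ^ DIM('a) = (A powr (1 / 2)) powr real DIM('a)"
    using A by (simp add: A_def powr_half_sqrt powr_realpow ac_simps)
  also have "\<dots> = A powr (real DIM('a) / 2)"
    by (simp add: powr_powr)
  finally have "(\<integral>\<^sup>+x. ennreal (exp (- (1 / (2 * \<sigma>\<^sup>2)) * (norm (x::'a))\<^sup>2)) \<partial>lborel)
      = ennreal (A powr (real DIM('a) / 2))" .
  moreover have "ennreal (A powr (- real DIM('a) / 2)) * ennreal (A powr (real DIM('a) / 2)) = 1"
    using A by (simp add: ennreal_mult[symmetric] powr_add[symmetric])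
  ultimately show ?thesis
    unfolding A_def by simp
qed

lemma nn_integral_mix_density:
  assumes "prob_density_pos f"
  shows "(\<integral>\<^sup>+x. mix_density f (x::'a::euclidean_space) \<partial>lborel) = 1"
proof -
  have f[measurable]: "f \<in> borel_measurable borel" and f_nonneg: "\<And>\<sigma>. 0 < \<sigma> \<Longrightarrow> 0 \<le> f \<sigma>"
    and f_int: "(\<integral>\<^sup>+\<sigma>. ennreal (f \<sigma>) * indicator {0<..} \<sigma> \<partial>lborel) = 1"
    using assms unfolding prob_density_pos_def by auto
  have "(\<integral>\<^sup>+x. mix_density f (x::'a) \<partial>lborel)
      = (\<integral>\<^sup>+\<sigma>. \<integral>\<^sup>+x. ennreal ((2 * pi * \<sigma>\<^sup>2) powr (- real DIM('a) / 2)
                     * exp (- (norm (x::'a))\<^sup>2 / (2 * \<sigma>\<^sup>2)) * f \<sigma>) * indicator {0<..} \<sigma> \<partial>lborel \<partial>lborel)"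
    unfolding mix_density_def by (rule lborel_pair.Fubini') measurable
  also have "\<dots> = (\<integral>\<^sup>+\<sigma>. ennreal (f \<sigma>) * indicator {0<..} \<sigma> \<partial>lborel)"
  proof (intro nn_integral_cong)
    fix \<sigma> :: real
    show "(\<integral>\<^sup>+x. ennreal ((2 * pi * \<sigma>\<^sup>2) powr (- real DIM('a) / 2) * exp (- (norm (x::'a))\<^sup>2 / (2 * \<sigma>\<^sup>2)) * f \<sigma>)
                * indicator {0<..} \<sigma> \<partial>lborel) = ennreal (f \<sigma>) * indicator {0<..} \<sigma>"
    proof (cases "0 < \<sigma>")
      case True
      have "(\<integral>\<^sup>+x. ennreal ((2 * pi * \<sigma>\<^sup>2) powr (- real DIM('a) / 2) * exp (- (norm (x::'a))\<^sup>2 / (2 * \<sigma>\<^sup>2)) * f \<sigma>)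
                \<partial>lborel)
          = ennreal (f \<sigma>) * (ennreal ((2 * pi * \<sigma>\<^sup>2) powr (- real DIM('a) / 2))
              * (\<integral>\<^sup>+x. ennreal (exp (- (1 / (2 * \<sigma>\<^sup>2)) * (norm (x::'a))\<^sup>2)) \<partial>lborel))"
        using f_nonneg[OF True]
        by (simp add: nn_integral_cmult[symmetric] ennreal_mult[symmetric] algebra_simps)
      then show ?thesis
        using True nn_integral_gauss_mixture_component[OF True, where 'a='a] by simp
    qed simp
  qed
  finally show ?thesis using f_int by simp
qed

lemma nn_integral_scaled_region_shift:
  fixes s :: "'a::euclidean_space"
  assumes [measurable]: "g \<in> borel_measurable borel" "\<Omega> \<in> sets borel" and p: "0 < p"
  shows "(\<integral>\<^sup>+x. g (x - sqrt p *\<^sub>R s) * indicator ((\<lambda>y. sqrt p *\<^sub>R y) ` \<Omega>) x \<partial>lborel)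
       = (\<integral>\<^sup>+y. g y * indicator ((\<lambda>z. z + s) -` \<Omega>) (inverse (sqrt p) *\<^sub>R y) \<partial>lborel)"
proof -
  have "x \<in> (\<lambda>y. sqrt p *\<^sub>R y) ` \<Omega> \<longleftrightarrow> inverse (sqrt p) *\<^sub>R (x - sqrt p *\<^sub>R s) + s \<in> \<Omega>" for x
    using p by (auto simp: image_iff scaleR_diff_right intro: bexI[of _ "inverse (sqrt p) *\<^sub>R x"])
  then have "(\<integral>\<^sup>+x. g (x - sqrt p *\<^sub>R s) * indicator ((\<lambda>y. sqrt p *\<^sub>R y) ` \<Omega>) x \<partial>lborel)
      = (\<integral>\<^sup>+x. (\<lambda>y. g y * indicator ((\<lambda>z. z + s) -` \<Omega>) (inverse (sqrt p) *\<^sub>R y)) (x - sqrt p *\<^sub>R s) \<partial>lborel)"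
    by (intro nn_integral_cong) (simp add: indicator_def)
  also have "\<dots> = (\<integral>\<^sup>+y. g y * indicator ((\<lambda>z. z + s) -` \<Omega>) (inverse (sqrt p) *\<^sub>R y) \<partial>lborel)"
    by (rule nn_integral_lborel_translate) measurable
  finally show ?thesis .
qed

lemma nn_integral_mix_density_gauss_mass:
  fixes D :: "'a::euclidean_space set"
  assumes [measurable]: "f \<in> borel_measurable borel" "D \<in> sets borel"
  shows "(\<integral>\<^sup>+y. mix_density f y * indicator D (inverse (sqrt p) *\<^sub>R y) \<partial>lborel)
       = (\<integral>\<^sup>+\<sigma>. ennreal (f \<sigma> * (2 * pi * \<sigma>\<^sup>2) powr (- real DIM('a) / 2)) * indicator {0<..} \<sigma>
                 * gauss_mass (1 / (2 * \<sigma>\<^sup>2)) D p \<partial>lborel)"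
proof -
  have "(\<integral>\<^sup>+y. mix_density f y * indicator D (inverse (sqrt p) *\<^sub>R y) \<partial>lborel)
      = (\<integral>\<^sup>+y. \<integral>\<^sup>+\<sigma>. ennreal ((2 * pi * \<sigma>\<^sup>2) powr (- real DIM('a) / 2) * exp (- (norm y)\<^sup>2 / (2 * \<sigma>\<^sup>2)) * f \<sigma>)
                    * indicator {0<..} \<sigma> * indicator D (inverse (sqrt p) *\<^sub>R y) \<partial>lborel \<partial>lborel)"
    unfolding mix_density_def by (intro nn_integral_cong nn_integral_multc[symmetric]) measurable
  also have "\<dots> = (\<integral>\<^sup>+\<sigma>. \<integral>\<^sup>+y. ennreal ((2 * pi * \<sigma>\<^sup>2) powr (- real DIM('a) / 2) * exp (- (norm y)\<^sup>2 / (2 * \<sigma>\<^sup>2)) * f \<sigma>)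
                    * indicator {0<..} \<sigma> * indicator D (inverse (sqrt p) *\<^sub>R y) \<partial>lborel \<partial>lborel)"
    by (rule lborel_pair.Fubini') measurable
  also have "\<dots> = (\<integral>\<^sup>+\<sigma>. ennreal (f \<sigma> * (2 * pi * \<sigma>\<^sup>2) powr (- real DIM('a) / 2)) * indicator {0<..} \<sigma>
                 * gauss_mass (1 / (2 * \<sigma>\<^sup>2)) D p \<partial>lborel)"
  proof (intro nn_integral_cong)
    fix \<sigma> :: real
    show "(\<integral>\<^sup>+y. ennreal ((2 * pi * \<sigma>\<^sup>2) powr (- real DIM('a) / 2) * exp (- (norm (y::'a))\<^sup>2 / (2 * \<sigma>\<^sup>2)) * f \<sigma>)
                    * indicator {0<..} \<sigma> * indicator D (inverse (sqrt p) *\<^sub>R y) \<partial>lborel)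
        = ennreal (f \<sigma> * (2 * pi * \<sigma>\<^sup>2) powr (- real DIM('a) / 2)) * indicator {0<..} \<sigma>
                 * gauss_mass (1 / (2 * \<sigma>\<^sup>2)) D p"
      unfolding gauss_mass_def
      by (subst nn_integral_cmult[symmetric])
         (auto intro!: nn_integral_cong simp: indicator_def ennreal_mult'[symmetric] algebra_simps)
  qed
  finally show ?thesis .
qed

lemma nn_integral_mix_density_region_le_1:
  fixes c :: "'a::euclidean_space"
  assumes "prob_density_pos f"
  shows "(\<integral>\<^sup>+x. mix_density f (x - c) * indicator A x \<partial>lborel) \<le> 1"
proof -
  have f[measurable]: "f \<in> borel_measurable borel"
    using assms by (simp add: prob_density_pos_def)
  have "(\<integral>\<^sup>+x. mix_density f (x - c) * indicator A x \<partial>lborel) \<le> (\<integral>\<^sup>+x. mix_density f (x - c) \<partial>lborel)"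
    by (intro nn_integral_mono) (simp add: indicator_def)
  also have "\<dots> = 1"
    using nn_integral_mix_density[OF assms] by (simp add: nn_integral_lborel_translate)
  finally show ?thesis .
qed

lemma concave_on_correct_prob:
  fixes s :: "'a::euclidean_space"
  assumes dim: "DIM('a) \<le> 2" and dens: "prob_density_pos f"
    and \<Omega>[measurable]: "\<Omega> \<in> sets borel" and cc: "center_convex s \<Omega>"
  shows "concave_on {0<..} (correct_prob f s \<Omega>)"
proof -
  have f[measurable]: "f \<in> borel_measurable borel"
    using dens by (simp add: prob_density_pos_def)
  define D where "D = (\<lambda>z. z + s) -` \<Omega>"
  have D[measurable]: "D \<in> sets borel"
    unfolding D_def by (rule measurable_sets_borel[OF _ \<Omega>]) simp
  have cD: "center_convex 0 D"
    unfolding D_def by (rule center_convex_translate[OF cc])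
  define E where "E p = (\<integral>\<^sup>+x. mix_density f (x - sqrt p *\<^sub>R s) * indicator ((\<lambda>y. sqrt p *\<^sub>R y) ` \<Omega>) x \<partial>lborel)"
    for p
  define W where "W \<sigma> p = ennreal (f \<sigma> * (2 * pi * \<sigma>\<^sup>2) powr (- real DIM('a) / 2)) * indicator {0<..} \<sigma>
                            * gauss_mass (1 / (2 * \<sigma>\<^sup>2)) D p" for \<sigma> p
  have "enn_concave_on {0<..} (\<lambda>p. \<integral>\<^sup>+\<sigma>. W \<sigma> p \<partial>lborel)"
  proof (rule enn_concave_on_nn_integral)
    fix \<sigma> :: real
    show "enn_concave_on {0<..} (W \<sigma>)"
    proof (cases "0 < \<sigma>")
      case True
      then show ?thesis
        unfolding W_def by (intro enn_concave_on_cmult enn_concave_on_gauss_mass dim D cD) simp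
    next
      case False
      then have "W \<sigma> = (\<lambda>p. 0)" by (simp add: fun_eq_iff W_def)
      then show ?thesis by (simp add: enn_concave_on_const)
    qed
  qed (simp_all add: W_def gauss_mass_def)
  moreover have "E p = (\<integral>\<^sup>+\<sigma>. W \<sigma> p \<partial>lborel)" if "0 < p" for p
  proof -
    have "E p = (\<integral>\<^sup>+y. mix_density f y * indicator D (inverse (sqrt p) *\<^sub>R y) \<partial>lborel)"
      unfolding E_def D_def using that by (intro nn_integral_scaled_region_shift) simp_all
    also have "\<dots> = (\<integral>\<^sup>+\<sigma>. W \<sigma> p \<partial>lborel)"
      unfolding W_def by (rule nn_integral_mix_density_gauss_mass) simp_all
    finally show ?thesis .
  qed
  ultimately have "enn_concave_on {0<..} E"
    by (auto intro: enn_concave_on_cong)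
  moreover have "E p < \<top>" for p
    unfolding E_def using nn_integral_mix_density_region_le_1[OF dens] by (rule order_le_less_trans) simp
  ultimately have "concave_on {0<..} (\<lambda>p. enn2real (E p))"
    by (intro concave_on_enn2real)
  then show ?thesis
    unfolding correct_prob_def E_def .
qed

theorem corollary3p4:
  fixes f :: "real \<Rightarrow> real" and M :: nat and \<pi> :: "nat \<Rightarrow> real"
    and s :: "nat \<Rightarrow> real ^ 'n" and \<Omega> :: "nat \<Rightarrow> (real ^ 'n) set"
  assumes dim: "CARD('n) \<le> 2"
    and dens: "prob_density_pos f"
    and priors_nonneg: "\<And>k. k < M \<Longrightarrow> \<pi> k \<ge> 0"
    and priors_sum: "(\<Sum>k<M. \<pi> k) = 1"
    and meas: "\<And>k. k < M \<Longrightarrow> \<Omega> k \<in> sets lborel"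
    and disj: "\<And>j k. j < M \<Longrightarrow> k < M \<Longrightarrow> j \<noteq> k \<Longrightarrow> \<Omega> j \<inter> \<Omega> k = {}"
    and cc: "\<And>k. k < M \<Longrightarrow> center_convex (s k) (\<Omega> k)"
  shows "convex_on {0<..} (sym_err_rate f M \<pi> s \<Omega>)"
proof -
  have "concave_on {0<..} (correct_prob f (s k) (\<Omega> k))" if "k < M" for k
    using dim dens meas[OF that] cc[OF that] by (intro concave_on_correct_prob) simp_all
  then have "convex_on {0<..} (\<lambda>p. \<pi> k * (1 - correct_prob f (s k) (\<Omega> k) p))" if "k < M" for k
    using that priors_nonneg by (intro convex_on_cmul convex_on_diff) (simp_all add: convex_on_const)
  then have "convex_on {0<..} (\<lambda>p. \<Sum>k<M. \<pi> k * (1 - correct_prob f (s k) (\<Omega> k) p))"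
    by (intro convex_on_sum_fun) simp_all
  then show ?thesis
    unfolding sym_err_rate_def[abs_def] .
qed

end
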